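(* Let $G$ be a signed digraph none of whose connected components is a signed cycle. Then $\lambda(G)=\max_\ell\lambda(G_\ell)$ and $\beta(G)=\max_\ell\beta(G_\ell)$, where $G_1,\dots,G_k$ are the connected components of $G$, and there exists a degree-bounded finite dynamical system $f:X\to X$ on $G$ such that $f^{\lambda(G)+\beta(G)}$ is a constant map.
   Context: A finite dynamical system (FDS) with $n$ components is a map $f=(f_1,\dots,f_n):X\to X$ where $X=X_1\times\cdots\times X_n$ and each $X_i$ is a nonempty finite interval of integers; $f^k$ is the $k$-fold composition. A signed digraph is a pair $G=(V,E)$ with $E\subseteq V\times V\times\{+,-\}$; $(j,i,s)\in E$ is an arc from $j$ to $i$ of sign $s$ (loops allowed; $G$ may have both a positive and a negative arc from $j$ to $i$, called parallel arcs). Write $G_i$ for the set of $j$ having an arc to $i$. In-degree $d^{\mathrm{in}}_G(i)$ and out-degree $d^{\mathrm{out}}_G(i)$ count arcs entering/leaving $i$, positive and negative arcs counted separately. Connected components are those of the underlying undirected graph. The underlying unsigned digraph $|G|$ has vertex set $V$ and an arc from $j$ to $i$ iff $j\in G_i$; $G$ is a signed cycle if $|G|$ is a directed cycle (through all vertices, each exactly once; a single vertex with a loop counts) and $G$ has no parallel arcs. A strong component is a maximal $U\subseteq V$ with $G[U]$ strongly connected; it is initial if no arc goes from $V\setminus U$ to $U$, trivial if $G[U]$ has one vertex and no arc. $G$ is basic if all its initial strong components are trivial; $\beta(G)=0$ if $G$ is basic, $1$ otherwise. $d_G(j,i)$ is the minimum number of arcs of a directed path from $j$ to $i$ ($0$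 if $j=i$, $\infty$ if none), $d_G(U,i)=\min_{j\in U}d_G(j,i)$, and with $\mathcal I$ the set of initial strong components, $\lambda(G)=\max_{i\in V}\min_{U\in\mathcal I}(d_G(U,i)+|U|)$. The interaction graph of an FDS $f$ is the signed digraph on $\{1,\dots,n\}$ with a positive (resp. negative) arc from $j$ to $i$ iff there is $x\in X$ with $x_j<\max(X_j)$ and $f_i(x+e_j)-f_i(x)$ positive (resp. negative), $e_j$ the $j$-th unit vector; $f$ is an FDS on $G$ if $G$ is its interaction graph. $f$ is degree-bounded if, with $G$ its interaction graph, for every $i$: $|X_i|=2$ if $d^{\mathrm{out}}_G(i)=0<d^{\mathrm{in}}_G(i)$, and $|X_i|\le d^{\mathrm{out}}_G(i)+1$ otherwise. *)

theory Defs
  imports Main "HOL-Library.Extended_Nat" "HOL-Library.FuncSet"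
begin

datatype sign = Pos | Neg

text \<open>A signed digraph is given by a vertex set V and an arc set E of triples
  (j, i, s): an arc from j to i with sign s. It is assumed E \<subseteq> V \<times> V \<times> UNIV.\<close>

definition arcrel :: "(nat \<times> nat \<times> sign) set \<Rightarrow> (nat \<times> nat) set" where
  "arcrel E = {(j, i). \<exists>s. (j, i, s) \<in> E}"

definition induced :: "(nat \<times> nat \<times> sign) set \<Rightarrow> nat set \<Rightarrow> (nat \<times> nat \<times> sign) set" where
  "induced E U = {(j, i, s). (j, i, s) \<in> E \<and> j \<in> U \<and> i \<in> U}"

definition in_deg :: "(nat \<times> nat \<times> sign) set \<Rightarrow> nat \<Rightarrow> nat" where
  "in_deg E i = card {(j, s). (j, i, s) \<in> E}"

definition out_deg :: "(nat \<times> nat \<times> sign) set \<Rightarrow> nat \<Rightarrow> nat" where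
  "out_deg E j = card {(i, s). (j, i, s) \<in> E}"

definition ucomps :: "nat set \<Rightarrow> (nat \<times> nat \<times> sign) set \<Rightarrow> nat set set" where
  "ucomps V E = (\<lambda>v. {u \<in> V. (v, u) \<in> (arcrel E \<union> (arcrel E)\<inverse>)\<^sup>*}) ` V"

definition signed_cycle :: "nat set \<Rightarrow> (nat \<times> nat \<times> sign) set \<Rightarrow> bool" where
  "signed_cycle V E \<longleftrightarrow>
     (\<exists>vs. vs \<noteq> [] \<and> distinct vs \<and> set vs = V \<and>
        arcrel E = {(vs ! k, vs ! ((k + 1) mod length vs)) | k. k < length vs}) \<and>
     (\<forall>j i. \<not> ((j, i, Pos) \<in> E \<and> (j, i, Neg) \<in> E))"

definition strongly_conn :: "(nat \<times> nat \<times> sign) set \<Rightarrow> nat set \<Rightarrow> bool" where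
  "strongly_conn E U \<longleftrightarrow> (\<forall>u\<in>U. \<forall>v\<in>U. (u, v) \<in> (arcrel (induced E U))\<^sup>*)"

definition strong_comp :: "nat set \<Rightarrow> (nat \<times> nat \<times> sign) set \<Rightarrow> nat set \<Rightarrow> bool" where
  "strong_comp V E U \<longleftrightarrow> U \<subseteq> V \<and> U \<noteq> {} \<and> strongly_conn E U \<and>
     (\<forall>W. U \<subseteq> W \<and> W \<subseteq> V \<and> strongly_conn E W \<longrightarrow> W = U)"

definition initial_comp :: "nat set \<Rightarrow> (nat \<times> nat \<times> sign) set \<Rightarrow> nat set \<Rightarrow> bool" where
  "initial_comp V E U \<longleftrightarrow> strong_comp V E U \<and>
     (\<forall>j i s. (j, i, s) \<in> E \<and> j \<in> V - U \<and> i \<in> U \<longrightarrow> False)"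

definition trivial_comp :: "(nat \<times> nat \<times> sign) set \<Rightarrow> nat set \<Rightarrow> bool" where
  "trivial_comp E U \<longleftrightarrow> card U = 1 \<and> induced E U = {}"

definition basic :: "nat set \<Rightarrow> (nat \<times> nat \<times> sign) set \<Rightarrow> bool" where
  "basic V E \<longleftrightarrow> (\<forall>U. initial_comp V E U \<longrightarrow> trivial_comp E U)"

definition beta :: "nat set \<Rightarrow> (nat \<times> nat \<times> sign) set \<Rightarrow> nat" where
  "beta V E = (if basic V E then 0 else 1)"

definition gdist :: "(nat \<times> nat \<times> sign) set \<Rightarrow> nat \<Rightarrow> nat \<Rightarrow> enat" where
  "gdist E j i = (if \<exists>k. (j, i) \<in> arcrel E ^^ k
                  then enat (LEAST k. (j, i) \<in> arcrel E ^^ k) else \<infinity>)"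

definition gdist_set :: "(nat \<times> nat \<times> sign) set \<Rightarrow> nat set \<Rightarrow> nat \<Rightarrow> enat" where
  "gdist_set E U i = Min ((\<lambda>j. gdist E j i) ` U)"

definition lam :: "nat set \<Rightarrow> (nat \<times> nat \<times> sign) set \<Rightarrow> enat" where
  "lam V E = Max ((\<lambda>i. Min ((\<lambda>U. gdist_set E U i + enat (card U)) ` {U. initial_comp V E U})) ` V)"

definition state_space :: "nat \<Rightarrow> (nat \<Rightarrow> int) \<Rightarrow> (nat \<Rightarrow> int) \<Rightarrow> (nat \<Rightarrow> int) set" where
  "state_space n a b = PiE {1..n} (\<lambda>i. {a i..b i})"

definition is_FDS :: "nat \<Rightarrow> (nat \<Rightarrow> int) \<Rightarrow> (nat \<Rightarrow> int) \<Rightarrow> ((nat \<Rightarrow> int) \<Rightarrow> (nat \<Rightarrow> int)) \<Rightarrow> bool" where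
  "is_FDS n a b f \<longleftrightarrow> (\<forall>i\<in>{1..n}. a i \<le> b i) \<and>
     (\<forall>x\<in>state_space n a b. f x \<in> state_space n a b)"

definition interaction_graph ::
  "nat \<Rightarrow> (nat \<Rightarrow> int) \<Rightarrow> (nat \<Rightarrow> int) \<Rightarrow> ((nat \<Rightarrow> int) \<Rightarrow> (nat \<Rightarrow> int)) \<Rightarrow> (nat \<times> nat \<times> sign) set" where
  "interaction_graph n a b f = {(j, i, s). j \<in> {1..n} \<and> i \<in> {1..n} \<and>
     (\<exists>x\<in>state_space n a b. x j < b j \<and>
        (case s of Pos \<Rightarrow> f (x(j := x j + 1)) i - f x i > 0
                 | Neg \<Rightarrow> f (x(j := x j + 1)) i - f x i < 0))}"

definition degree_bounded ::
  "nat \<Rightarrow> (nat \<Rightarrow> int) \<Rightarrow> (nat \<Rightarrow> int) \<Rightarrow> ((nat \<Rightarrow> int) \<Rightarrow> (nat \<Rightarrow> int)) \<Rightarrow> bool" where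
  "degree_bounded n a b f \<longleftrightarrow> (let G = interaction_graph n a b f in
     \<forall>i\<in>{1..n}. (if out_deg G i = 0 \<and> 0 < in_deg G i then card {a i..b i} = 2
                  else card {a i..b i} \<le> out_deg G i + 1))"

end

theory Submission
  imports Defs "HOL-Combinatorics.Orbits"
begin

text \<open>Every initial strong component lies inside one connected component, so \<open>\<lambda>\<close> and \<open>\<beta>\<close>
  are maxima over the connected components.

  For the dynamical system, each vertex with in-neighbours is canalized by one of them, its
  parent. Outside the nontrivial initial components the parent is the predecessor on a
  shortest path from an initial component U minimising \<open>d(U, i) + |U|\<close>. A nontrivial initial
  component is not a signed cycle, so it has a vertex v of out-degree at least two, which
  leaves room in \<open>X\<^sub>v\<close> to make one arc v \<rightarrow> w inside the component blind: both output values
  of v lie on the same side of its literal. Then w is constant after two steps, the rest of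
  the component stabilises along a tree grown from w within \<open>|U| + 1\<close> steps, and by induction
  along parents every vertex is constant after \<open>min\<^sub>U (d(U, i) + |U|) + \<beta>\<close> steps.\<close>

lemma arcrel_induced: "arcrel (induced E U) = arcrel E \<inter> U \<times> U"
  by (auto simp: arcrel_def induced_def)

lemma induced_induced: "U \<subseteq> C \<Longrightarrow> induced (induced E C) U = induced E U"
  by (auto simp: induced_def)

lemma arcrel_subset: "E \<subseteq> V \<times> V \<times> UNIV \<Longrightarrow> arcrel E \<subseteq> V \<times> V"
  by (auto simp: arcrel_def)

lemma finite_arcs:
  fixes E :: "('a \<times> 'a \<times> sign) set"
  assumes "finite V" "E \<subseteq> V \<times> V \<times> UNIV"
  shows "finite E"
proof -
  have "(UNIV :: sign set) = {Pos, Neg}" by (auto intro: sign.exhaust)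
  then have "finite (UNIV :: sign set)" by (metis finite.emptyI finite.insertI)
  then have "finite (V \<times> V \<times> (UNIV :: sign set))" using assms(1) by simp
  then show ?thesis using assms(2) finite_subset by blast
qed

lemma finite_out_arcs: "finite E \<Longrightarrow> finite {(i, s). (j, i, s) \<in> E}"
  by (rule finite_subset[of _ "(\<lambda>(_, i, s). (i, s)) ` E"]) force+

lemma finite_in_arcs: "finite E \<Longrightarrow> finite {(j, s). (j, i, s) \<in> E}"
  by (rule finite_subset[of _ "(\<lambda>(j, _, s). (j, s)) ` E"]) force+

lemma rtrancl_Int_Times:
  assumes "(a, b) \<in> R\<^sup>*" and "\<And>y. (a, y) \<in> R\<^sup>* \<Longrightarrow> (y, b) \<in> R\<^sup>* \<Longrightarrow> y \<in> U"
  shows "(a, b) \<in> (R \<inter> U \<times> U)\<^sup>*"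
  using assms
proof (induction rule: converse_rtrancl_induct)
  case (step y z)
  have "(y, b) \<in> R\<^sup>*" using step.hyps by (rule converse_rtrancl_into_rtrancl)
  then have "y \<in> U" using step.prems by blast
  moreover have "z \<in> U" using step.prems step.hyps by blast
  moreover have "(z, b) \<in> (R \<inter> U \<times> U)\<^sup>*"
    using step.IH step.prems step.hyps(1) by (meson converse_rtrancl_into_rtrancl)
  ultimately show ?case using step.hyps(1) by (blast intro: converse_rtrancl_into_rtrancl)
qed simp

lemma strongly_conn_rtrancl:
  "strongly_conn E W \<Longrightarrow> u \<in> W \<Longrightarrow> v \<in> W \<Longrightarrow> (u, v) \<in> (arcrel E)\<^sup>*"
  unfolding strongly_conn_def arcrel_induced by (meson Int_lower1 rtrancl_mono subsetD)

lemma strongly_conn_induced: "U \<subseteq> C \<Longrightarrow> strongly_conn (induced E C) U = strongly_conn E U"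
  by (simp add: strongly_conn_def induced_induced)

lemma strong_comp_unique:
  assumes "strong_comp V E U" "strong_comp V E U'" "x \<in> U" "x \<in> U'"
  shows "U = U'"
proof -
  have "strongly_conn E (U \<union> U')"
    unfolding strongly_conn_def
  proof (intro ballI)
    have "(arcrel (induced E W))\<^sup>* \<subseteq> (arcrel (induced E (U \<union> U')))\<^sup>*" if "W \<subseteq> U \<union> U'" for W
      using that by (intro rtrancl_mono) (auto simp: arcrel_induced)
    moreover have "strongly_conn E U" "strongly_conn E U'"
      using assms by (auto simp: strong_comp_def)
    moreover fix a b assume "a \<in> U \<union> U'" "b \<in> U \<union> U'"
    ultimately have "(a, x) \<in> (arcrel (induced E (U \<union> U')))\<^sup>*" "(x, b) \<in> (arcrel (induced E (U \<union> U')))\<^sup>*"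
      using assms(3,4) unfolding strongly_conn_def by blast+
    then show "(a, b) \<in> (arcrel (induced E (U \<union> U')))\<^sup>*" by (rule rtrancl_trans)
  qed
  moreover have "U \<union> U' \<subseteq> V" using assms by (auto simp: strong_comp_def)
  ultimately have "U \<union> U' = U" "U \<union> U' = U'"
    using assms(1,2) unfolding strong_comp_def by (metis Un_upper1, metis Un_upper2)
  then show ?thesis by simp
qed

definition scc_of :: "(nat \<times> nat \<times> sign) set \<Rightarrow> nat set \<Rightarrow> nat \<Rightarrow> nat set" where
  "scc_of E V u = {z \<in> V. (z, u) \<in> (arcrel E)\<^sup>* \<and> (u, z) \<in> (arcrel E)\<^sup>*}"

lemma strong_comp_scc_of:
  assumes "E \<subseteq> V \<times> V \<times> UNIV" "u \<in> V"
  shows "strong_comp V E (scc_of E V u)"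
proof -
  let ?R = "arcrel E" and ?U = "scc_of E V u"
  have "strongly_conn E ?U"
    unfolding strongly_conn_def arcrel_induced
  proof (intro ballI)
    fix z1 z2 assume z: "z1 \<in> ?U" "z2 \<in> ?U"
    show "(z1, z2) \<in> (?R \<inter> ?U \<times> ?U)\<^sup>*"
    proof (rule rtrancl_Int_Times)
      show "(z1, z2) \<in> ?R\<^sup>*" using z by (auto simp: scc_of_def intro: rtrancl_trans)
      fix y assume y: "(z1, y) \<in> ?R\<^sup>*" "(y, z2) \<in> ?R\<^sup>*"
      have "y \<in> V"
        using y(1) z(1) arcrel_subset[OF assms(1)]
        by (cases rule: rtrancl.cases) (auto simp: scc_of_def)
      then show "y \<in> ?U" using y z by (auto simp: scc_of_def intro: rtrancl_trans)
    qed
  qed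
  moreover have "W \<subseteq> ?U" if "strongly_conn E W" "u \<in> W" "W \<subseteq> V" for W
    using that strongly_conn_rtrancl by (fastforce simp: scc_of_def)
  ultimately show ?thesis using assms(2) unfolding strong_comp_def scc_of_def by blast
qed

lemma initial_comp_ancestor:
  assumes "initial_comp V E U" "E \<subseteq> V \<times> V \<times> UNIV" "(j, i) \<in> (arcrel E)\<^sup>*" "i \<in> U"
  shows "j \<in> U"
  using assms(3,4)
proof (induction rule: converse_rtrancl_induct)
  case (step y z)
  then obtain s where "(y, z, s) \<in> E" "z \<in> U" by (auto simp: arcrel_def)
  then show ?case using assms(1,2) unfolding initial_comp_def by blast
qed

text \<open>An ancestor u of i with the fewest ancestors has all its ancestors in its own strong
  component, so that component is initial.\<close>

lemma initial_comp_exists: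
  assumes "finite V" "E \<subseteq> V \<times> V \<times> UNIV" "i \<in> V"
  obtains U u where "initial_comp V E U" "u \<in> U" "(u, i) \<in> (arcrel E)\<^sup>*"
proof -
  let ?R = "arcrel E"
  define anc where "anc z = {y \<in> V. (y, z) \<in> ?R\<^sup>*}" for z
  have "i \<in> anc i" using assms by (auto simp: anc_def)
  then obtain u where u: "u \<in> anc i" and u_min: "\<And>u'. u' \<in> anc i \<Longrightarrow> card (anc u) \<le> card (anc u')"
    using ex_has_least_nat[of "\<lambda>u. u \<in> anc i" i "\<lambda>u. card (anc u)"] by blast
  let ?U = "scc_of E V u"
  have "initial_comp V E ?U"
    unfolding initial_comp_def
  proof (intro conjI strong_comp_scc_of allI impI)
    show "E \<subseteq> V \<times> V \<times> UNIV" "u \<in> V" using assms(2) u by (auto simp: anc_def)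
    fix j z s assume a: "(j, z, s) \<in> E \<and> j \<in> V - ?U \<and> z \<in> ?U"
    then have ju: "(j, u) \<in> ?R\<^sup>*"
      by (auto simp: scc_of_def arcrel_def intro: converse_rtrancl_into_rtrancl)
    then have "anc j \<subseteq> anc u" "j \<in> anc i"
      using a u by (auto simp: anc_def intro: rtrancl_trans)
    moreover have "finite (anc u)" using assms(1) by (simp add: anc_def)
    ultimately have "anc j = anc u" using u_min by (meson card_seteq)
    then have "(u, j) \<in> ?R\<^sup>*" using \<open>u \<in> V\<close> by (auto simp: anc_def)
    then show False using a ju by (simp add: scc_of_def)
  qed
  moreover have "u \<in> ?U" "(u, i) \<in> ?R\<^sup>*" using u by (auto simp: scc_of_def anc_def)
  ultimately show ?thesis using that by blast
qed

lemma initial_comp_subset: "initial_comp V E U \<Longrightarrow> U \<subseteq> V \<and> U \<noteq> {}"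
  by (auto simp: initial_comp_def strong_comp_def)

lemma finite_initial_comps: "finite V \<Longrightarrow> finite {U. initial_comp V E U}"
  by (rule finite_subset[of _ "Pow V"]) (auto dest: initial_comp_subset)

lemma strongly_conn_out_arc:
  assumes "strongly_conn E U" "finite U" "\<not> trivial_comp E U" "v \<in> U"
  shows "\<exists>y\<in>U. (v, y) \<in> arcrel E"
proof (cases "card U = 1")
  case True
  then have "U = {v}" using assms(4) by (metis card_1_singletonE singletonD)
  moreover have "induced E U \<noteq> {}" using True assms(3) by (simp add: trivial_comp_def)
  ultimately show ?thesis by (auto simp: induced_def arcrel_def)
next
  case False
  then have "U \<noteq> {v}" by auto
  then obtain u where u: "u \<in> U" "u \<noteq> v" using assms(4) by blast
  have "(v, u) \<in> (arcrel (induced E U))\<^sup>*" using assms(1,4) u(1) by (simp add: strongly_conn_def)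
  then have "(v, u) \<in> (arcrel (induced E U))\<^sup>+" using u(2) by (simp add: rtrancl_eq_or_trancl)
  then obtain y where "(v, y) \<in> arcrel (induced E U)" by (meson converse_tranclE)
  then show ?thesis by (auto simp: arcrel_induced)
qed

definition arc_closed :: "nat set \<Rightarrow> (nat \<times> nat \<times> sign) set \<Rightarrow> nat set \<Rightarrow> bool" where
  "arc_closed V E C \<longleftrightarrow> C \<subseteq> V \<and> (\<forall>j i. (j, i) \<in> arcrel E \<longrightarrow> (j \<in> C \<longleftrightarrow> i \<in> C))"

lemma arc_closed_rtrancl:
  assumes "arc_closed V E C" "(j, i) \<in> (arcrel E)\<^sup>*"
  shows "j \<in> C \<longleftrightarrow> i \<in> C"
  using assms(2) by induction (use assms(1) in \<open>auto simp: arc_closed_def\<close>)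

lemma ucomp_arc_closed:
  assumes "E \<subseteq> V \<times> V \<times> UNIV" "C \<in> ucomps V E"
  shows "arc_closed V E C"
proof -
  let ?S = "arcrel E \<union> (arcrel E)\<inverse>"
  obtain v where C: "C = {u \<in> V. (v, u) \<in> ?S\<^sup>*}" using assms(2) by (auto simp: ucomps_def)
  show ?thesis
    unfolding arc_closed_def
  proof (intro conjI allI impI)
    fix j i assume ji: "(j, i) \<in> arcrel E"
    then have "(j, i) \<in> ?S" "(i, j) \<in> ?S" "j \<in> V" "i \<in> V"
      using arcrel_subset[OF assms(1)] by auto
    then have "(v, j) \<in> ?S\<^sup>* \<longleftrightarrow> (v, i) \<in> ?S\<^sup>*"
      using rtrancl_into_rtrancl[of v j ?S i] rtrancl_into_rtrancl[of v i ?S j] by blast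
    then show "j \<in> C \<longleftrightarrow> i \<in> C" using \<open>j \<in> V\<close> \<open>i \<in> V\<close> by (simp add: C)
  qed (simp add: C)
qed

lemma strongly_conn_subset_arc_closed:
  assumes "arc_closed V E C" "strongly_conn E W" "u \<in> W" "u \<in> C"
  shows "W \<subseteq> C"
proof
  fix w assume "w \<in> W"
  with assms(2,3) have "(u, w) \<in> (arcrel E)\<^sup>*" by (rule strongly_conn_rtrancl)
  with assms(4) show "w \<in> C" using arc_closed_rtrancl[OF assms(1)] by blast
qed

lemma initial_comp_subset_or_disjoint:
  assumes "arc_closed V E C" "initial_comp V E U"
  shows "U \<subseteq> C \<or> U \<inter> C = {}"
proof (cases "U \<inter> C = {}")
  case False
  then obtain u where "u \<in> U" "u \<in> C" by blast
  moreover have "strongly_conn E U" using assms(2) by (simp add: initial_comp_def strong_comp_def)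
  ultimately show ?thesis using strongly_conn_subset_arc_closed[OF assms(1)] by blast
qed simp

lemma strong_comp_induced_iff:
  assumes "arc_closed V E C"
  shows "strong_comp C (induced E C) U \<longleftrightarrow> strong_comp V E U \<and> U \<subseteq> C"
proof -
  have C: "C \<subseteq> V" using assms by (simp add: arc_closed_def)
  have sc: "strongly_conn (induced E C) W \<longleftrightarrow> strongly_conn E W" if "W \<subseteq> C" for W
    using that by (rule strongly_conn_induced)
  have into_C: "W \<subseteq> C" if "U \<subseteq> W" "U \<subseteq> C" "U \<noteq> {}" "strongly_conn E W" for W
    using that strongly_conn_subset_arc_closed[OF assms] by blast
  show ?thesis
  proof
    assume U: "strong_comp C (induced E C) U"
    then have "U \<subseteq> C" "U \<noteq> {}" "strongly_conn E U"
      using sc unfolding strong_comp_def by blast+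
    moreover have "W = U" if "U \<subseteq> W" "W \<subseteq> V" "strongly_conn E W" for W
      using U that into_C[OF that(1) calculation(1,2) that(3)] sc unfolding strong_comp_def by blast
    ultimately show "strong_comp V E U \<and> U \<subseteq> C"
      using C unfolding strong_comp_def by blast
  next
    assume "strong_comp V E U \<and> U \<subseteq> C"
    then show "strong_comp C (induced E C) U"
      using C sc unfolding strong_comp_def by (meson order_trans)
  qed
qed

lemma initial_comp_induced_iff:
  assumes "arc_closed V E C"
  shows "initial_comp C (induced E C) U \<longleftrightarrow> initial_comp V E U \<and> U \<subseteq> C"
proof -
  have "j \<in> C" if "(j, i, s) \<in> E" "i \<in> U" "U \<subseteq> C" for j i s
    using assms that unfolding arc_closed_def arcrel_def by blast
  moreover have "C \<subseteq> V" using assms by (simp add: arc_closed_def)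
  ultimately show ?thesis
    unfolding initial_comp_def strong_comp_induced_iff[OF assms] by (auto simp: induced_def) (meson subsetD)+
qed

lemma relpow_mono: "(R :: ('a \<times> 'a) set) \<subseteq> S \<Longrightarrow> R ^^ k \<subseteq> S ^^ k"
  by (induction k) (simp_all add: relcomp_mono)

lemma relpow_induced_iff:
  assumes "arc_closed V E C" "j \<in> C"
  shows "(j, i) \<in> (arcrel (induced E C)) ^^ k \<longleftrightarrow> (j, i) \<in> (arcrel E) ^^ k"
proof
  show "(j, i) \<in> (arcrel (induced E C)) ^^ k \<Longrightarrow> (j, i) \<in> (arcrel E) ^^ k"
    using relpow_mono[of "arcrel (induced E C)" "arcrel E"] by (auto simp: arcrel_induced)
next
  show "(j, i) \<in> (arcrel E) ^^ k \<Longrightarrow> (j, i) \<in> (arcrel (induced E C)) ^^ k"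
  proof (induction k arbitrary: i)
    case (Suc k)
    then obtain y where y: "(j, y) \<in> (arcrel E) ^^ k" "(y, i) \<in> arcrel E" by auto
    then have "y \<in> C" using arc_closed_rtrancl[OF assms(1) relpow_imp_rtrancl] assms(2) by blast
    then have "(y, i) \<in> arcrel (induced E C)"
      using y(2) assms(1) by (auto simp: arcrel_induced arc_closed_def)
    with Suc.IH[OF y(1)] show ?case by auto
  qed simp
qed

lemma gdist_induced:
  assumes "arc_closed V E C" "j \<in> C"
  shows "gdist (induced E C) j i = gdist E j i"
  using relpow_induced_iff[OF assms] by (simp add: gdist_def)

lemma gdist_infinite: "(j, i) \<notin> (arcrel E)\<^sup>* \<Longrightarrow> gdist E j i = \<infinity>"
  by (auto simp: gdist_def dest: relpow_imp_rtrancl)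

lemma gdist_le: "(j, i) \<in> (arcrel E) ^^ k \<Longrightarrow> gdist E j i \<le> enat k"
  by (auto simp: gdist_def intro: Least_le)

lemma relpow_gdist: "gdist E j i = enat d \<Longrightarrow> (j, i) \<in> (arcrel E) ^^ d"
  by (auto simp: gdist_def intro: LeastI split: if_splits)

lemma gdist_set_induced:
  assumes "arc_closed V E C" "U \<subseteq> C"
  shows "gdist_set (induced E C) U i = gdist_set E U i"
  using gdist_induced[OF assms(1)] assms(2) unfolding gdist_set_def
  by (intro arg_cong[where f = Min] image_cong) auto

lemma gdist_set_infinite:
  assumes "arc_closed V E C" "i \<in> C" "U \<inter> C = {}" "finite U" "U \<noteq> {}"
  shows "gdist_set E U i = \<infinity>"
proof -
  have "gdist E j i = \<infinity>" if "j \<in> U" for j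
    using that assms(1-3) arc_closed_rtrancl gdist_infinite by blast
  then show ?thesis using assms(4,5) unfolding gdist_set_def by simp
qed

definition lam_at :: "nat set \<Rightarrow> (nat \<times> nat \<times> sign) set \<Rightarrow> nat \<Rightarrow> enat" where
  "lam_at V E i = Min ((\<lambda>U. gdist_set E U i + enat (card U)) ` {U. initial_comp V E U})"

lemma lam_eq_Max_lam_at: "lam V E = Max (lam_at V E ` V)"
  by (simp add: lam_def lam_at_def)

lemma Min_image_subset_eq:
  fixes f :: "'a \<Rightarrow> 'b::linorder"
  assumes "finite A" "B \<subseteq> A" "B \<noteq> {}" "\<And>x y. x \<in> A - B \<Longrightarrow> y \<in> B \<Longrightarrow> f y \<le> f x"
  shows "Min (f ` A) = Min (f ` B)"
proof (rule antisym)
  show "Min (f ` A) \<le> Min (f ` B)" using assms(1-3) by (intro Min_antimono) auto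
  have "finite B" using assms(1,2) finite_subset by blast
  have "Min (f ` B) \<le> f x" if "x \<in> A" for x
  proof (cases "x \<in> B")
    case False
    obtain y where "y \<in> B" using assms(3) by blast
    then have "Min (f ` B) \<le> f y" using \<open>finite B\<close> by simp
    also have "f y \<le> f x" using False that \<open>y \<in> B\<close> assms(4) by blast
    finally show ?thesis .
  qed (use \<open>finite B\<close> in simp)
  then show "Min (f ` B) \<le> Min (f ` A)" using assms(1-3) by (subst Min_ge_iff) auto
qed

lemma lam_at_induced:
  assumes "finite V" "E \<subseteq> V \<times> V \<times> UNIV" "arc_closed V E C" "i \<in> C"
  shows "lam_at C (induced E C) i = lam_at V E i"
proof -
  let ?h = "\<lambda>U. gdist_set E U i + enat (card U)"
  have "{U. initial_comp C (induced E C) U} = {U. initial_comp V E U \<and> U \<subseteq> C}"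
    using initial_comp_induced_iff[OF assms(3)] by blast
  then have "lam_at C (induced E C) i = Min (?h ` {U. initial_comp V E U \<and> U \<subseteq> C})"
    unfolding lam_at_def using gdist_set_induced[OF assms(3)]
    by (intro arg_cong[where f = Min] image_cong) auto
  also have "\<dots> = Min (?h ` {U. initial_comp V E U})"
  proof (rule Min_image_subset_eq[symmetric])
    obtain U u where "initial_comp V E U" "u \<in> U" "(u, i) \<in> (arcrel E)\<^sup>*"
      using initial_comp_exists assms arc_closed_def by (metis subsetD)
    moreover have "u \<in> C" using calculation(3) assms(3,4) arc_closed_rtrancl by blast
    ultimately show "{U. initial_comp V E U \<and> U \<subseteq> C} \<noteq> {}"
      using initial_comp_subset_or_disjoint[OF assms(3)] by blast
    fix U assume "U \<in> {U. initial_comp V E U} - {U. initial_comp V E U \<and> U \<subseteq> C}"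
    then have U: "initial_comp V E U" "\<not> U \<subseteq> C" by auto
    then have "U \<inter> C = {}" using initial_comp_subset_or_disjoint[OF assms(3)] by blast
    moreover have "U \<subseteq> V" "U \<noteq> {}" using initial_comp_subset[OF U(1)] by auto
    moreover have "finite U" using calculation(2) assms(1) finite_subset by blast
    ultimately show "?h U' \<le> ?h U" for U'
      using gdist_set_infinite[OF assms(3,4)] by simp
  qed (use finite_initial_comps assms(1) in auto)
  finally show ?thesis by (simp add: lam_at_def)
qed

lemma Max_image_Union:
  fixes f :: "'a \<Rightarrow> 'b::complete_linorder"
  assumes "finite CC" "CC \<noteq> {}" "\<And>C. C \<in> CC \<Longrightarrow> finite C \<and> C \<noteq> {}"
  shows "Max (f ` \<Union> CC) = Max ((\<lambda>C. Max (f ` C)) ` CC)"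
proof -
  have "Max (f ` \<Union> CC) = (SUP C\<in>CC. Sup (f ` C))"
    using assms by (subst Max_Sup) (auto simp: SUP_UNION[of f id CC, simplified])
  also have "\<dots> = Max ((\<lambda>C. Max (f ` C)) ` CC)"
    using assms by (simp add: Max_Sup)
  finally show ?thesis .
qed

section \<open>Reduction to connected components\<close>

lemma ucomps_cover: "\<Union> (ucomps V E) = V"
  unfolding ucomps_def by auto

lemma lam_components:
  assumes "finite V" "E \<subseteq> V \<times> V \<times> UNIV" "V \<noteq> {}"
  shows "lam V E = Max ((\<lambda>C. lam C (induced E C)) ` ucomps V E)"
proof -
  have "lam V E = Max (lam_at V E ` \<Union> (ucomps V E))"
    by (simp add: lam_eq_Max_lam_at ucomps_cover)
  also have "\<dots> = Max ((\<lambda>C. Max (lam_at V E ` C)) ` ucomps V E)"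
    using assms by (intro Max_image_Union) (auto simp: ucomps_def)
  also have "\<dots> = Max ((\<lambda>C. lam C (induced E C)) ` ucomps V E)"
    using lam_at_induced[OF assms(1,2) ucomp_arc_closed[OF assms(2)]]
    by (intro arg_cong[where f = Max] image_cong) (simp_all add: lam_eq_Max_lam_at)
  finally show ?thesis .
qed

lemma trivial_comp_induced: "U \<subseteq> C \<Longrightarrow> trivial_comp (induced E C) U \<longleftrightarrow> trivial_comp E U"
  by (simp add: trivial_comp_def induced_induced)

lemma initial_comp_in_ucomp:
  assumes "E \<subseteq> V \<times> V \<times> UNIV" "initial_comp V E U"
  obtains C where "C \<in> ucomps V E" "initial_comp C (induced E C) U" "U \<subseteq> C"
proof -
  obtain u where "u \<in> U" "u \<in> V" using initial_comp_subset[OF assms(2)] by blast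
  then obtain C where C: "C \<in> ucomps V E" "u \<in> C" unfolding ucomps_def by blast
  note closed = ucomp_arc_closed[OF assms(1) C(1)]
  have "U \<subseteq> C" using initial_comp_subset_or_disjoint[OF closed assms(2)] C(2) \<open>u \<in> U\<close> by blast
  then show ?thesis using that C(1) initial_comp_induced_iff[OF closed] assms(2) by blast
qed

lemma basic_components:
  assumes "E \<subseteq> V \<times> V \<times> UNIV"
  shows "basic V E \<longleftrightarrow> (\<forall>C\<in>ucomps V E. basic C (induced E C))"
proof
  assume basic: "basic V E"
  show "\<forall>C\<in>ucomps V E. basic C (induced E C)"
    unfolding basic_def
  proof (intro ballI allI impI)
    fix C U assume "C \<in> ucomps V E" "initial_comp C (induced E C) U"
    then have "initial_comp V E U" "U \<subseteq> C"
      using initial_comp_induced_iff[OF ucomp_arc_closed[OF assms]] by blast+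
    then show "trivial_comp (induced E C) U"
      using basic trivial_comp_induced unfolding basic_def by blast
  qed
next
  assume comps: "\<forall>C\<in>ucomps V E. basic C (induced E C)"
  show "basic V E"
    unfolding basic_def
  proof (intro allI impI)
    fix U assume "initial_comp V E U"
    then obtain C where "C \<in> ucomps V E" "initial_comp C (induced E C) U" "U \<subseteq> C"
      using initial_comp_in_ucomp[OF assms] by blast
    then show "trivial_comp E U" using comps trivial_comp_induced unfolding basic_def by blast
  qed
qed

lemma beta_components:
  assumes "finite V" "E \<subseteq> V \<times> V \<times> UNIV" "V \<noteq> {}"
  shows "beta V E = Max ((\<lambda>C. beta C (induced E C)) ` ucomps V E)"
proof -
  let ?B = "(\<lambda>C. beta C (induced E C)) ` ucomps V E"
  have fin: "finite ?B" and ne: "ucomps V E \<noteq> {}"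
    using assms(1,3) by (simp_all add: ucomps_def)
  show ?thesis
  proof (cases "basic V E")
    case True
    then have "?B = {0}" using basic_components[OF assms(2)] ne by (auto simp: beta_def)
    then show ?thesis using True by (simp add: beta_def)
  next
    case False
    then obtain C where C: "C \<in> ucomps V E" "\<not> basic C (induced E C)"
      using basic_components[OF assms(2)] by blast
    then have "1 \<in> ?B" by (force simp: beta_def)
    moreover have "\<forall>b\<in>?B. b \<le> 1" by (auto simp: beta_def)
    ultimately have "Max ?B = 1" using fin by (intro Max_eqI) auto
    then show ?thesis using False by (simp add: beta_def)
  qed
qed

lemma relpow_fun_conv_segment:
  assumes "\<forall>i<k. (g i, g (Suc i)) \<in> R" "i \<le> j" "j \<le> k"
  shows "(g i, g j) \<in> R ^^ (j - i)"
  using assms(2,3)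
proof (induction j)
  case (Suc j)
  show ?case
  proof (cases "i = Suc j")
    case False
    then have "(g i, g j) \<in> R ^^ (j - i)" "(g j, g (Suc j)) \<in> R"
      using Suc assms(1) by simp_all
    then show ?thesis using False Suc.prems by (auto simp: Suc_diff_le)
  qed simp
qed simp

lemma relpow_shorter_than_card:
  fixes R :: "('a \<times> 'a) set"
  assumes "finite U" "R \<subseteq> U \<times> U" "a \<in> U" "(a, b) \<in> R ^^ k"
  shows "\<exists>k'<card U. (a, b) \<in> R ^^ k'"
  using assms(4)
proof (induction k rule: less_induct)
  case (less k)
  show ?case
  proof (cases "k < card U")
    case False
    from less.prems obtain g where g: "g 0 = a" "g k = b" "\<forall>i<k. (g i, g (Suc i)) \<in> R"
      unfolding relpow_fun_conv by blast
    have "g i \<in> U" if "i \<le> k" for i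
    proof (cases i)
      case (Suc j)
      then have "(g j, g i) \<in> R" using g(3) that by simp
      then show ?thesis using assms(2) by blast
    qed (use g(1) assms(3) in simp)
    then have "card (g ` {0..k}) \<le> card U" using assms(1) by (intro card_mono) auto
    then have "\<not> inj_on g {0..k}" using False by (auto dest: card_image)
    then obtain p0 q0 where "p0 \<le> k" "q0 \<le> k" "g p0 = g q0" "p0 \<noteq> q0"
      unfolding inj_on_def by auto
    then obtain p q where pq: "p < q" "q \<le> k" "g p = g q"
      by (intro that[of "min p0 q0" "max p0 q0"]) (auto simp: min_def max_def)
    have "(a, g p) \<in> R ^^ p" "(g q, b) \<in> R ^^ (k - q)"
      using relpow_fun_conv_segment[OF g(3), of 0 p] relpow_fun_conv_segment[OF g(3), of q k] g pq
      by simp_all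
    then have "(a, b) \<in> R ^^ p O R ^^ (k - q)" using pq(3) by auto
    then have "(a, b) \<in> R ^^ (p + (k - q))" by (simp add: relpow_add)
    moreover have "p + (k - q) < k" using pq(1,2) by linarith
    ultimately show ?thesis using less.IH by blast
  qed (use less.prems in blast)
qed

lemma orbit_cycle_list:
  assumes "x \<in> orbit f x"
  obtains vs where "vs \<noteq> []" "distinct vs" "set vs = orbit f x"
    "\<And>k. k < length vs \<Longrightarrow> vs ! ((k + 1) mod length vs) = f (vs ! k)"
proof
  let ?P = "funpow_dist1 f x x"
  define vs where "vs = map (\<lambda>k. (f ^^ k) x) [0..<?P]"
  show "vs \<noteq> []" by (simp add: vs_def)
  show "distinct vs" using inj_on_funpow_dist1[OF assms] by (simp add: vs_def distinct_map del: upt_Suc)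
  show "set vs = orbit f x" using orbit_conv_funpow_dist1[OF assms] by (simp add: vs_def del: upt_Suc)
  fix k assume k: "k < length vs"
  show "vs ! ((k + 1) mod length vs) = f (vs ! k)"
  proof (cases "k + 1 < ?P")
    case False
    then have "k + 1 = ?P" using k by (simp add: vs_def del: upt_Suc)
    then have "f (vs ! k) = x" using funpow_dist1_prop[OF assms] k by (simp add: vs_def del: upt_Suc)
    then show ?thesis using \<open>k + 1 = ?P\<close> by (simp add: vs_def del: upt_Suc)
  qed (use k in \<open>simp add: vs_def del: upt_Suc\<close>)
qed

lemma strongly_conn_orbit:
  assumes "strongly_conn E U" "u0 \<in> U"
    and nxt_in: "\<And>v. v \<in> U \<Longrightarrow> nxt v \<in> U \<and> (v, nxt v) \<in> arcrel E"
    and nxt_unique: "\<And>v w s. v \<in> U \<Longrightarrow> (v, w, s) \<in> E \<Longrightarrow> w = nxt v"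
  shows "u0 \<in> orbit nxt u0" "orbit nxt u0 = U"
proof -
  have reach: "\<exists>k. u = (nxt ^^ k) v" if "v \<in> U" "(v, u) \<in> (arcrel E)\<^sup>*" for v u
    using that(2)
  proof (induction rule: rtrancl_induct)
    case (step b c)
    then obtain k where k: "b = (nxt ^^ k) v" by blast
    have "(nxt ^^ k) v \<in> U" using that(1) nxt_in by (induction k) auto
    then have "c = nxt b" using step.hyps(2) nxt_unique k by (auto simp: arcrel_def)
    then have "c = (nxt ^^ Suc k) v" using k by simp
    then show ?case by blast
  qed (rule exI[of _ 0], simp)
  have "(nxt u0, u0) \<in> (arcrel E)\<^sup>*"
    using assms(1,2) nxt_in strongly_conn_rtrancl by blast
  then obtain k where "u0 = (nxt ^^ k) (nxt u0)" using reach nxt_in[OF assms(2)] by blast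
  then have "u0 = (nxt ^^ Suc k) u0" by (simp add: funpow_swap1)
  then show orb: "u0 \<in> orbit nxt u0" unfolding orbit_altdef using zero_less_Suc by blast
  show "orbit nxt u0 = U"
  proof
    show "orbit nxt u0 \<subseteq> U"
    proof
      fix u assume "u \<in> orbit nxt u0"
      then show "u \<in> U" by induction (use nxt_in assms(2) in auto)
    qed
    show "U \<subseteq> orbit nxt u0"
      using reach[OF assms(2)] strongly_conn_rtrancl[OF assms(1,2)] orbit_altdef_self_in[OF orb]
      by blast
  qed
qed

lemma signed_cycle_of_successor:
  assumes "strongly_conn E U" "u0 \<in> U"
    and nxt_in: "\<And>v. v \<in> U \<Longrightarrow> nxt v \<in> U \<and> (v, nxt v) \<in> arcrel E"
    and nxt_unique: "\<And>v w s. v \<in> U \<Longrightarrow> (v, w, s) \<in> E \<Longrightarrow> w = nxt v"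
    and no_parallel: "\<And>v w. v \<in> U \<Longrightarrow> \<not> ((v, w, Pos) \<in> E \<and> (v, w, Neg) \<in> E)"
  shows "signed_cycle U (induced E U)"
proof -
  have orb: "u0 \<in> orbit nxt u0"
    by (rule strongly_conn_orbit(1)[OF assms(1,2)]) (use nxt_in nxt_unique in auto)
  have orb_U: "orbit nxt u0 = U"
    by (rule strongly_conn_orbit(2)[OF assms(1,2)]) (use nxt_in nxt_unique in auto)
  obtain vs where vs: "vs \<noteq> []" "distinct vs" "set vs = orbit nxt u0"
    and next_vs: "\<And>k. k < length vs \<Longrightarrow> vs ! ((k + 1) mod length vs) = nxt (vs ! k)"
    using orbit_cycle_list[OF orb] by blast
  have "arcrel (induced E U) = (\<lambda>v. (v, nxt v)) ` U"
    unfolding arcrel_induced using nxt_in nxt_unique by (auto simp: arcrel_def)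
  also have "\<dots> = (\<lambda>k. (vs ! k, nxt (vs ! k))) ` {..<length vs}"
    unfolding vs(3)[unfolded orb_U, symmetric] set_conv_nth by auto
  also have "\<dots> = {(vs ! k, vs ! ((k + 1) mod length vs)) | k. k < length vs}"
    using next_vs by auto
  finally have "arcrel (induced E U) = {(vs ! k, vs ! ((k + 1) mod length vs)) | k. k < length vs}" .
  moreover have "\<forall>j i. \<not> ((j, i, Pos) \<in> induced E U \<and> (j, i, Neg) \<in> induced E U)"
    using no_parallel by (auto simp: induced_def)
  ultimately show ?thesis
    unfolding signed_cycle_def using vs orb_U by blast
qed

lemma initial_comp_ucomp:
  assumes "initial_comp V E U" "\<And>v w. v \<in> U \<Longrightarrow> (v, w) \<in> arcrel E \<Longrightarrow> w \<in> U"
    and "E \<subseteq> V \<times> V \<times> UNIV"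
  shows "U \<in> ucomps V E"
proof -
  let ?S = "arcrel E \<union> (arcrel E)\<inverse>"
  obtain u0 where u0: "u0 \<in> U" "U \<subseteq> V" using initial_comp_subset[OF assms(1)] by blast
  have sc: "strongly_conn E U" using assms(1) by (simp add: initial_comp_def strong_comp_def)
  have "u \<in> U" if "(u0, u) \<in> ?S\<^sup>*" for u
    using that
  proof (induction rule: rtrancl_induct)
    case (step a b)
    then show ?case
    proof (cases "(a, b) \<in> arcrel E")
      case False
      then obtain s where "(b, a, s) \<in> E" using step.hyps(2) by (auto simp: arcrel_def)
      then show ?thesis using assms(1,3) step.IH unfolding initial_comp_def by blast
    qed (use assms(2) in blast)
  qed (rule u0(1))
  moreover have "(u0, u) \<in> ?S\<^sup>*" if "u \<in> U" for u
    using strongly_conn_rtrancl[OF sc u0(1) that] rtrancl_mono[of "arcrel E" ?S] by blast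
  ultimately have "U = {u \<in> V. (u0, u) \<in> ?S\<^sup>*}" using u0 by blast
  then show ?thesis using u0 unfolding ucomps_def by blast
qed

lemma initial_comp_out_deg_le_1:
  assumes "finite V" "E \<subseteq> V \<times> V \<times> UNIV" "initial_comp V E U" "\<not> trivial_comp E U"
    and "\<And>v. v \<in> U \<Longrightarrow> out_deg E v \<le> 1"
  shows "U \<in> ucomps V E \<and> signed_cycle U (induced E U)"
proof -
  have sc: "strongly_conn E U" using assms(3) by (simp add: initial_comp_def strong_comp_def)
  have U: "U \<subseteq> V" "U \<noteq> {}" using initial_comp_subset[OF assms(3)] by auto
  then have out: "\<exists>y\<in>U. (v, y) \<in> arcrel E" if "v \<in> U" for v
    using strongly_conn_out_arc[OF sc _ assms(4) that] assms(1) finite_subset by blast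
  have "finite {(w, s). (v, w, s) \<in> E}" for v
    using finite_out_arcs[OF finite_arcs[OF assms(1,2)]] .
  then have unique: "w = w' \<and> s = s'" if "v \<in> U" "(v, w, s) \<in> E" "(v, w', s') \<in> E" for v w s w' s'
    using assms(5)[OF that(1)] that(2,3) unfolding out_deg_def by (auto simp: card_le_Suc0_iff_eq)
  define nxt where "nxt v = (SOME y. y \<in> U \<and> (v, y) \<in> arcrel E)" for v
  have nxt_in: "nxt v \<in> U \<and> (v, nxt v) \<in> arcrel E" if "v \<in> U" for v
    unfolding nxt_def using out[OF that] by (rule someI2_bex) blast
  have nxt_unique: "w = nxt v" if "v \<in> U" "(v, w, s) \<in> E" for v w s
    using nxt_in[OF that(1)] unique[OF that(1,2)] by (auto simp: arcrel_def)
  obtain u0 where "u0 \<in> U" using U by blast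
  have "w \<in> U" if v: "v \<in> U" and vw: "(v, w) \<in> arcrel E" for v w
  proof -
    obtain s where "(v, w, s) \<in> E" using vw by (auto simp: arcrel_def)
    then show ?thesis using nxt_unique nxt_in v by blast
  qed
  then have "U \<in> ucomps V E" using assms(2,3) by (intro initial_comp_ucomp)
  moreover have "signed_cycle U (induced E U)"
  proof (rule signed_cycle_of_successor[of E U u0 nxt])
    show "\<not> ((v, w, Pos) \<in> E \<and> (v, w, Neg) \<in> E)" if "v \<in> U" for v w
      using unique[OF that, of w Pos w Neg] by auto
  qed (use sc \<open>u0 \<in> U\<close> nxt_in nxt_unique in auto)
  ultimately show ?thesis ..
qed

locale fds_construction =
  fixes n :: nat and E :: "(nat \<times> nat \<times> sign) set"
  assumes n_pos: "1 \<le> n"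
    and arcs_in_V: "E \<subseteq> {1..n} \<times> {1..n} \<times> UNIV"
    and no_cycle_comp: "\<forall>C\<in>ucomps {1..n} E. \<not> signed_cycle C (induced E C)"
begin

abbreviation V :: "nat set" where "V \<equiv> {1..n}"
abbreviation R :: "(nat \<times> nat) set" where "R \<equiv> arcrel E"

lemma R_subset: "R \<subseteq> V \<times> V"
  by (rule arcrel_subset[OF arcs_in_V])

lemma finite_E: "finite E"
  using finite_arcs[OF _ arcs_in_V] by simp

definition in_nbrs :: "nat \<Rightarrow> nat set" where
  "in_nbrs i = {j. (j, i) \<in> R}"

definition parallel :: "nat \<Rightarrow> nat \<Rightarrow> bool" where
  "parallel j i \<longleftrightarrow> (j, i, Pos) \<in> E \<and> (j, i, Neg) \<in> E"

lemma in_deg_pos: "in_nbrs i \<noteq> {} \<Longrightarrow> 0 < in_deg E i"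
  using finite_in_arcs[OF finite_E, of i]
  by (auto simp: in_nbrs_def arcrel_def in_deg_def card_gt_0_iff)

lemma out_deg_pos: "(j, i) \<in> R \<Longrightarrow> 0 < out_deg E j"
  using finite_out_arcs[OF finite_E, of j]
  by (auto simp: arcrel_def out_deg_def card_gt_0_iff)

lemma parallel_out_deg: "parallel j i \<Longrightarrow> 2 \<le> out_deg E j"
  using card_mono[OF finite_out_arcs[OF finite_E], of "{(i, Pos), (i, Neg)}" j]
  by (simp add: parallel_def out_deg_def)

section \<open>Nontrivial initial components and their cut arcs\<close>

definition nontrivial_initial :: "nat set \<Rightarrow> bool" where
  "nontrivial_initial U \<longleftrightarrow> initial_comp V E U \<and> \<not> trivial_comp E U"

lemma nontrivial_initial_subset:
  assumes "nontrivial_initial U"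
  shows "U \<subseteq> V" "U \<noteq> {}" "finite U" "card U \<le> n"
proof -
  show "U \<subseteq> V" "U \<noteq> {}" using assms initial_comp_subset by (auto simp: nontrivial_initial_def)
  then show "finite U" "card U \<le> n" using finite_subset card_mono[of V U] by auto
qed

lemma nontrivial_initial_unique:
  "nontrivial_initial U \<Longrightarrow> nontrivial_initial U' \<Longrightarrow> i \<in> U \<Longrightarrow> i \<in> U' \<Longrightarrow> U = U'"
  unfolding nontrivial_initial_def initial_comp_def using strong_comp_unique by blast

lemma nontrivial_initial_branching:
  assumes "nontrivial_initial U"
  shows "\<exists>v\<in>U. \<exists>w\<in>U. (v, w) \<in> R \<and> 2 \<le> out_deg E v"
proof (rule ccontr)
  assume no_branching: "\<not> ?thesis"
  have init: "initial_comp V E U" and nontriv: "\<not> trivial_comp E U"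
    using assms by (auto simp: nontrivial_initial_def)
  have "out_deg E v \<le> 1" if v: "v \<in> U" for v
  proof -
    have "strongly_conn E U" using init by (simp add: initial_comp_def strong_comp_def)
    then obtain w where "w \<in> U" "(v, w) \<in> R"
      using strongly_conn_out_arc nontrivial_initial_subset(3)[OF assms] nontriv v by blast
    then show ?thesis using no_branching v by fastforce
  qed
  then have "U \<in> ucomps V E \<and> signed_cycle U (induced E U)"
    using initial_comp_out_deg_le_1[OF _ arcs_in_V init nontriv] by simp
  then show False using no_cycle_comp by blast
qed

definition cut_arc :: "nat set \<Rightarrow> nat \<times> nat" where
  "cut_arc U = (SOME (v, w). v \<in> U \<and> w \<in> U \<and> (v, w) \<in> R \<and> 2 \<le> out_deg E v)"

abbreviation cut_src :: "nat set \<Rightarrow> nat" where "cut_src U \<equiv> fst (cut_arc U)"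
abbreviation cut_tgt :: "nat set \<Rightarrow> nat" where "cut_tgt U \<equiv> snd (cut_arc U)"

lemma cut_arc:
  assumes "nontrivial_initial U"
  shows "cut_src U \<in> U" "cut_tgt U \<in> U" "(cut_src U, cut_tgt U) \<in> R" "2 \<le> out_deg E (cut_src U)"
proof -
  have "\<exists>p. (\<lambda>(v, w). v \<in> U \<and> w \<in> U \<and> (v, w) \<in> R \<and> 2 \<le> out_deg E v) p"
    using nontrivial_initial_branching[OF assms] by auto
  then have "(\<lambda>(v, w). v \<in> U \<and> w \<in> U \<and> (v, w) \<in> R \<and> 2 \<le> out_deg E v) (cut_arc U)"
    unfolding cut_arc_def by (rule someI_ex)
  then show "cut_src U \<in> U" "cut_tgt U \<in> U" "(cut_src U, cut_tgt U) \<in> R" "2 \<le> out_deg E (cut_src U)"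
    by (simp_all add: case_prod_beta)
qed

definition in_nontrivial :: "nat \<Rightarrow> bool" where
  "in_nontrivial i \<longleftrightarrow> (\<exists>U. nontrivial_initial U \<and> i \<in> U)"

definition comp_of :: "nat \<Rightarrow> nat set" where
  "comp_of i = (SOME U. nontrivial_initial U \<and> i \<in> U)"

lemma comp_of: "in_nontrivial i \<Longrightarrow> nontrivial_initial (comp_of i) \<and> i \<in> comp_of i"
  unfolding in_nontrivial_def comp_of_def by (rule someI_ex)

lemma comp_of_eq: "nontrivial_initial U \<Longrightarrow> i \<in> U \<Longrightarrow> comp_of i = U"
  using comp_of nontrivial_initial_unique in_nontrivial_def by blast

definition is_cut_src :: "nat \<Rightarrow> bool" where
  "is_cut_src j \<longleftrightarrow> in_nontrivial j \<and> j = cut_src (comp_of j)"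

definition is_cut_tgt :: "nat \<Rightarrow> bool" where
  "is_cut_tgt i \<longleftrightarrow> in_nontrivial i \<and> i = cut_tgt (comp_of i)"

definition cut_single :: "nat \<Rightarrow> bool" where
  "cut_single j \<longleftrightarrow> is_cut_src j \<and> \<not> parallel j (cut_tgt (comp_of j))"

lemma cut_src_out_deg: "is_cut_src j \<Longrightarrow> 2 \<le> out_deg E j"
  unfolding is_cut_src_def using comp_of cut_arc(4) by metis

text \<open>Component j ranges over {0..xmax j}, and when active it outputs xon j. The literal
  lit j i a says that the value a of j pushes i in the direction of the arc j \<rightarrow> i: it holds
  above the threshold for a positive arc, below it for a negative one, and exactly at 1 for
  parallel arcs. At the source v of a cut arc v \<rightarrow> w the two outputs 0 and xon v lie on the
  same side of lit v w, so the cut arc never transmits information.\<close>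

definition xmax :: "nat \<Rightarrow> int" where
  "xmax j = (if out_deg E j = 0 then (if 0 < in_deg E j then 1 else 0)
             else if (\<exists>i. parallel j i) \<or> is_cut_src j then 2 else 1)"

definition xon :: "nat \<Rightarrow> int" where
  "xon j = (if cut_single j then 1 else xmax j)"

definition thr :: "nat \<Rightarrow> int" where
  "thr j = (if cut_single j then 2 else 1)"

definition lit :: "nat \<Rightarrow> nat \<Rightarrow> int \<Rightarrow> bool" where
  "lit j i a \<longleftrightarrow> (if parallel j i then a = 1 else if (j, i, Pos) \<in> E then thr j \<le> a else a < thr j)"

lemma xmax_range: "0 \<le> xmax j \<and> xmax j \<le> 2"
  by (simp add: xmax_def)

lemma xmax_le_out_deg: "out_deg E j \<noteq> 0 \<Longrightarrow> xmax j \<le> int (out_deg E j)"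
  using parallel_out_deg cut_src_out_deg by (fastforce simp: xmax_def)

lemma cut_single_xmax: "cut_single j \<Longrightarrow> xmax j = 2"
  using cut_src_out_deg[of j] by (simp add: cut_single_def xmax_def)

lemma parallel_xmax: "parallel j i \<Longrightarrow> xmax j = 2"
  using parallel_out_deg[of j i] by (auto simp: xmax_def)

lemma xon_range: "0 \<le> xon j \<and> xon j \<le> xmax j"
  using cut_single_xmax xmax_range by (auto simp: xon_def)

lemma xon_pos: "in_nbrs i \<noteq> {} \<Longrightarrow> 1 \<le> xon i"
  using in_deg_pos[of i] by (auto simp: xon_def xmax_def)

lemma thr_range:
  assumes "(j, i) \<in> R"
  shows "1 \<le> thr j \<and> thr j \<le> xmax j"
proof -
  have "1 \<le> xmax j" using out_deg_pos[OF assms] by (simp add: xmax_def)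
  then show ?thesis using cut_single_xmax[of j] by (auto simp: thr_def)
qed

lemma lit_both_values:
  assumes "(j, i) \<in> R"
  obtains a b where "0 \<le> a" "a \<le> xmax j" "lit j i a" "0 \<le> b" "b \<le> xmax j" "\<not> lit j i b"
proof (cases "parallel j i")
  case True
  then show ?thesis using that[of 1 0] parallel_xmax[OF True] by (simp add: lit_def)
next
  case False
  show ?thesis
  proof (cases "(j, i, Pos) \<in> E")
    case True
    then show ?thesis using that[of "xmax j" 0] False thr_range[OF assms] by (simp add: lit_def)
  next
    case not_Pos: False
    then show ?thesis using that[of 0 "xmax j"] False thr_range[OF assms] by (simp add: lit_def)
  qed
qed

lemma lit_cut_const:
  assumes "nontrivial_initial U"
  shows "lit (cut_src U) (cut_tgt U) (xon (cut_src U)) = lit (cut_src U) (cut_tgt U) 0"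
proof -
  let ?v = "cut_src U" and ?w = "cut_tgt U"
  have "comp_of ?v = U" using comp_of_eq[OF assms cut_arc(1)[OF assms]] .
  moreover have "is_cut_src ?v"
    using assms cut_arc(1)[OF assms] calculation by (auto simp: is_cut_src_def in_nontrivial_def)
  ultimately show ?thesis
    using parallel_xmax[of ?v ?w] by (auto simp: cut_single_def xon_def thr_def lit_def)
qed

section \<open>A canalizing spanning forest\<close>

definition lv :: "nat \<Rightarrow> nat" where
  "lv i = the_enat (lam_at V E i)"

lemma lam_at_le:
  assumes "initial_comp V E U" "j \<in> U" "(j, i) \<in> R ^^ d"
  shows "lam_at V E i \<le> enat (d + card U)"
proof -
  have "finite U" using initial_comp_subset[OF assms(1)] finite_subset by blast
  then have "gdist_set E U i \<le> gdist E j i"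
    unfolding gdist_set_def using assms(2) by (intro Min_le) auto
  also have "\<dots> \<le> enat d" using assms(3) by (rule gdist_le)
  finally have "gdist_set E U i + enat (card U) \<le> enat d + enat (card U)"
    by (rule add_right_mono)
  moreover have "lam_at V E i \<le> gdist_set E U i + enat (card U)"
    unfolding lam_at_def using finite_initial_comps assms(1) by (intro Min_le) auto
  ultimately show ?thesis by simp
qed

lemma lam_at_witness:
  assumes "i \<in> V"
  obtains U j d where "initial_comp V E U" "j \<in> U" "(j, i) \<in> R ^^ d"
    "lam_at V E i = enat (d + card U)"
proof -
  let ?h = "\<lambda>U. gdist_set E U i + enat (card U)"
  obtain U0 u where U0: "initial_comp V E U0" "u \<in> U0" "(u, i) \<in> R\<^sup>*"
    using initial_comp_exists[OF finite_atLeastAtMost arcs_in_V assms] by blast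
  obtain k where "(u, i) \<in> R ^^ k" using U0(3) rtrancl_power by blast
  have "lam_at V E i \<in> ?h ` {U. initial_comp V E U}"
    unfolding lam_at_def using finite_initial_comps U0(1) by (intro Min_in) auto
  then obtain U where U: "initial_comp V E U" "lam_at V E i = ?h U" by auto
  have "?h U \<le> enat (k + card U0)" using lam_at_le[OF U0(1,2) \<open>(u, i) \<in> R ^^ k\<close>] U(2) by simp
  then have "?h U \<noteq> \<infinity>" by (metis infinity_ileE)
  moreover have "finite U" "U \<noteq> {}" using initial_comp_subset[OF U(1)] finite_subset by auto
  then have "gdist_set E U i \<in> (\<lambda>j. gdist E j i) ` U" unfolding gdist_set_def by (intro Min_in) auto
  then obtain j where j: "j \<in> U" "gdist_set E U i = gdist E j i" by auto
  ultimately obtain d where "gdist E j i = enat d" by (cases "gdist E j i") auto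
  then show ?thesis using that[OF U(1) j(1)] relpow_gdist U(2) j(2) by simp
qed

lemma lam_at_lv:
  assumes "i \<in> V"
  shows "lam_at V E i = enat (lv i)"
proof -
  obtain U j d where "initial_comp V E U" "j \<in> U" "(j, i) \<in> R ^^ d"
    "lam_at V E i = enat (d + card U)" by (rule lam_at_witness[OF assms])
  then show ?thesis by (simp add: lv_def)
qed

lemma lv_le:
  assumes "initial_comp V E U" "j \<in> U" "(j, i) \<in> R ^^ d" "i \<in> V"
  shows "lv i \<le> d + card U"
  using lam_at_le[OF assms(1-3)] lam_at_lv[OF assms(4)] by simp

lemma lv_pos: "i \<in> V \<Longrightarrow> 1 \<le> lv i"
proof -
  assume "i \<in> V"
  then obtain U j d where "initial_comp V E U" "j \<in> U" "lam_at V E i = enat (d + card U)"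
    by (rule lam_at_witness)
  moreover have "card U \<noteq> 0"
    using initial_comp_subset[OF calculation(1)] finite_subset[of U V] by auto
  ultimately show ?thesis using lam_at_lv[OF \<open>i \<in> V\<close>] by simp
qed

lemma lam_eq_Max_lv: "lam V E = enat (Max (lv ` V))"
proof -
  have "lam V E = Max (enat ` lv ` V)"
    unfolding lam_eq_Max_lam_at image_image using lam_at_lv by simp
  also have "\<dots> = enat (Max (lv ` V))"
    using n_pos by (intro mono_Max_commute[symmetric]) (auto simp: mono_def)
  finally show ?thesis .
qed

lemma card_comp_of_le_lv:
  assumes "in_nontrivial i"
  shows "card (comp_of i) \<le> lv i"
proof -
  let ?U = "comp_of i"
  have nt: "nontrivial_initial ?U" "i \<in> ?U" using comp_of[OF assms] by auto
  then have "i \<in> V" using nontrivial_initial_subset(1) by blast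
  then obtain U j d where U: "initial_comp V E U" "j \<in> U" "(j, i) \<in> R ^^ d"
    "lam_at V E i = enat (d + card U)" by (rule lam_at_witness)
  have "j \<in> ?U"
    using initial_comp_ancestor[OF _ arcs_in_V relpow_imp_rtrancl[OF U(3)] nt(2)] nt(1)
    by (simp add: nontrivial_initial_def)
  then have "U = ?U"
    using U(1,2) nt(1) strong_comp_unique unfolding nontrivial_initial_def initial_comp_def by blast
  then show ?thesis using U(4) lam_at_lv[OF \<open>i \<in> V\<close>] by simp
qed

lemma lv_parent_exists:
  assumes "i \<in> V" "\<not> in_nontrivial i" "in_nbrs i \<noteq> {}"
  shows "\<exists>p. (p, i) \<in> R \<and> lv p < lv i"
proof -
  obtain U j d where U: "initial_comp V E U" "j \<in> U" "(j, i) \<in> R ^^ d"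
    "lam_at V E i = enat (d + card U)" using lam_at_witness[OF assms(1)] .
  show ?thesis
  proof (cases d)
    case 0
    then have "i \<in> U" using U(2,3) by simp
    then have "trivial_comp E U"
      using assms(2) U(1) by (auto simp: in_nontrivial_def nontrivial_initial_def)
    then have "induced E U = {}" by (simp add: trivial_comp_def)
    obtain p s where p: "(p, i, s) \<in> E" using assms(3) by (auto simp: in_nbrs_def arcrel_def)
    show ?thesis
    proof (cases "p \<in> U")
      case True
      then show ?thesis using p \<open>i \<in> U\<close> \<open>induced E U = {}\<close> by (auto simp: induced_def)
    next
      case False
      then have "p \<in> V - U" using p arcs_in_V by auto
      then show ?thesis using p U(1) \<open>i \<in> U\<close> unfolding initial_comp_def by blast
    qed
  next
    case (Suc d')
    then obtain y where y: "(j, y) \<in> R ^^ d'" "(y, i) \<in> R" using U(3) by auto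
    then have "lv y \<le> d' + card U" using lv_le[OF U(1,2)] R_subset by blast
    then show ?thesis using y(2) U(4) Suc lam_at_lv[OF assms(1)] by auto
  qed
qed

abbreviation arcs_in :: "nat set \<Rightarrow> (nat \<times> nat) set" where
  "arcs_in U \<equiv> arcrel (induced E U)"

definition cut_dist :: "nat \<Rightarrow> nat" where
  "cut_dist i = (LEAST k. (cut_tgt (comp_of i), i) \<in> (arcs_in (comp_of i)) ^^ k)"

lemma cut_dist:
  assumes "in_nontrivial i"
  shows "(cut_tgt (comp_of i), i) \<in> (arcs_in (comp_of i)) ^^ cut_dist i"
    and "cut_dist i < card (comp_of i)"
proof -
  let ?U = "comp_of i" and ?w = "cut_tgt (comp_of i)"
  have nt: "nontrivial_initial ?U" "i \<in> ?U" using comp_of[OF assms] by auto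
  have w: "?w \<in> ?U" using cut_arc(2)[OF nt(1)] .
  have "strongly_conn E ?U"
    using nt(1) by (simp add: nontrivial_initial_def initial_comp_def strong_comp_def)
  then have "(?w, i) \<in> (arcs_in ?U)\<^sup>*" using w nt(2) by (simp add: strongly_conn_def)
  then obtain k where "(?w, i) \<in> (arcs_in ?U) ^^ k" using rtrancl_power by blast
  then show path: "(?w, i) \<in> (arcs_in ?U) ^^ cut_dist i"
    unfolding cut_dist_def by (rule LeastI)
  obtain k' where "k' < card ?U" "(?w, i) \<in> (arcs_in ?U) ^^ k'"
    using relpow_shorter_than_card[OF nontrivial_initial_subset(3)[OF nt(1)] _ w path]
    by (auto simp: arcrel_induced)
  moreover have "cut_dist i \<le> k'" unfolding cut_dist_def using calculation(2) by (rule Least_le)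
  ultimately show "cut_dist i < card ?U" by simp
qed

lemma cut_dist_tgt: "is_cut_tgt i \<Longrightarrow> cut_dist i = 0"
  unfolding cut_dist_def is_cut_tgt_def by (rule Least_eq_0) simp

lemma cut_dist_parent_exists:
  assumes "in_nontrivial i" "\<not> is_cut_tgt i"
  shows "\<exists>p. (p, i) \<in> arcs_in (comp_of i) \<and> cut_dist p < cut_dist i"
proof -
  let ?U = "comp_of i"
  have path: "(cut_tgt ?U, i) \<in> (arcs_in ?U) ^^ cut_dist i" using cut_dist(1)[OF assms(1)] .
  have "cut_dist i \<noteq> 0"
  proof
    assume "cut_dist i = 0"
    with path have "cut_tgt ?U = i" by simp
    with assms show False by (simp add: is_cut_tgt_def)
  qed
  then obtain d where d: "cut_dist i = Suc d" by (cases "cut_dist i") auto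
  then obtain y where y: "(cut_tgt ?U, y) \<in> (arcs_in ?U) ^^ d" "(y, i) \<in> arcs_in ?U"
    using path by auto
  then have "comp_of y = ?U"
    using comp_of_eq comp_of[OF assms(1)] by (auto simp: arcrel_induced)
  then have "cut_dist y \<le> d" unfolding cut_dist_def using y(1) by (simp add: Least_le)
  then show ?thesis using d y(2) by auto
qed

text \<open>Inside a nontrivial initial component the parent of i is closer to the cut target, outside
  it has smaller lv; since cut_dist < n, depth decreases from every vertex to its parent.\<close>

definition parent :: "nat \<Rightarrow> nat" where
  "parent i = (if in_nontrivial i then (SOME p. (p, i) \<in> arcs_in (comp_of i) \<and> cut_dist p < cut_dist i)
               else (SOME p. (p, i) \<in> R \<and> lv p < lv i))"

definition depth :: "nat \<Rightarrow> nat" where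
  "depth i = (if in_nbrs i = {} \<or> is_cut_tgt i then 0
              else if in_nontrivial i then cut_dist i else n + lv i)"

lemma parent_inside:
  assumes "in_nontrivial i" "\<not> is_cut_tgt i"
  shows "(parent i, i) \<in> R" "in_nontrivial (parent i)" "cut_dist (parent i) < cut_dist i"
proof -
  have "(parent i, i) \<in> arcs_in (comp_of i) \<and> cut_dist (parent i) < cut_dist i"
    unfolding parent_def using assms(1) someI_ex[OF cut_dist_parent_exists[OF assms]] by simp
  moreover have "nontrivial_initial (comp_of i)" using comp_of[OF assms(1)] by blast
  ultimately show "(parent i, i) \<in> R" "in_nontrivial (parent i)" "cut_dist (parent i) < cut_dist i"
    by (auto simp: arcrel_induced in_nontrivial_def)
qed

lemma parent_outside:
  assumes "i \<in> V" "\<not> in_nontrivial i" "in_nbrs i \<noteq> {}"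
  shows "(parent i, i) \<in> R" "lv (parent i) < lv i"
  using someI_ex[OF lv_parent_exists[OF assms]] assms(2) by (simp_all add: parent_def)

lemma parent_props:
  assumes "i \<in> V" "in_nbrs i \<noteq> {}" "\<not> is_cut_tgt i"
  shows "(parent i, i) \<in> R" "parent i \<in> V" "depth (parent i) < depth i"
proof -
  show "(parent i, i) \<in> R"
    by (cases "in_nontrivial i") (use parent_inside(1) parent_outside(1) assms in auto)
  then show pV: "parent i \<in> V" using R_subset by blast
  show "depth (parent i) < depth i"
  proof (cases "in_nontrivial i")
    case True
    then show ?thesis using parent_inside[OF True assms(3)] assms(2,3) by (auto simp: depth_def)
  next
    case False
    have "cut_dist (parent i) < n" if "in_nontrivial (parent i)"
      using cut_dist(2)[OF that] nontrivial_initial_subset(4) comp_of[OF that] by fastforce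
    then have "depth (parent i) \<le> n + lv (parent i)" by (auto simp: depth_def)
    also have "\<dots> < n + lv i" using parent_outside(2)[OF assms(1) False assms(2)] by simp
    finally show ?thesis using False assms(2) by (simp add: depth_def is_cut_tgt_def)
  qed
qed

text \<open>Whether i is eventually on is decided by a single canalizing in-neighbour: its parent,
  or, at the target of a cut arc, the cut literal, which is constant. Iterating along the
  parent forest therefore stabilises after depth i steps.\<close>

definition canal_on :: "(nat \<Rightarrow> int) \<Rightarrow> nat \<Rightarrow> bool" where
  "canal_on c i \<longleftrightarrow> (if in_nbrs i = {} then False
                     else if is_cut_tgt i then lit (cut_src (comp_of i)) i 0
                     else lit (parent i) i (c (parent i)))"

primrec fix_iter :: "nat \<Rightarrow> nat \<Rightarrow> int" where
  "fix_iter 0 i = 0"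
| "fix_iter (Suc k) i = (if canal_on (fix_iter k) i then xon i else 0)"

definition fix_val :: "nat \<Rightarrow> int" where
  "fix_val i = fix_iter (Suc (depth i)) i"

definition fix_on :: "nat \<Rightarrow> bool" where
  "fix_on i \<longleftrightarrow> canal_on fix_val i"

lemma fix_iter_stable: "i \<in> V \<Longrightarrow> depth i < k \<Longrightarrow> fix_iter k i = fix_val i"
proof (induction "depth i" arbitrary: i k rule: less_induct)
  case less
  obtain k' where k': "k = Suc k'" using less.prems(2) by (cases k) auto
  have "canal_on (fix_iter k') i = canal_on (fix_iter (depth i)) i"
  proof (cases "in_nbrs i = {} \<or> is_cut_tgt i")
    case False
    then have "parent i \<in> V" "depth (parent i) < depth i"
      using parent_props less.prems(1) by blast+
    then have "fix_iter k' (parent i) = fix_iter (depth i) (parent i)"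
      using less.hyps less.prems(2) k' by simp
    then show ?thesis using False by (simp add: canal_on_def)
  qed (auto simp: canal_on_def)
  then show ?case using k' by (simp add: fix_val_def)
qed

lemma fix_val_eq: "i \<in> V \<Longrightarrow> fix_val i = (if fix_on i then xon i else 0)"
  using fix_iter_stable[of _ "depth i"] parent_props
  unfolding fix_on_def by (cases "in_nbrs i = {} \<or> is_cut_tgt i") (auto simp: fix_val_def canal_on_def)

section \<open>The dynamical system\<close>

text \<open>Component i is an OR of its literals if it is eventually on and an AND otherwise; either
  way a single literal agreeing with fix_on i determines its value.\<close>

definition active :: "nat \<Rightarrow> (nat \<Rightarrow> int) \<Rightarrow> bool" where
  "active i x \<longleftrightarrow> (if fix_on i then (\<exists>j\<in>in_nbrs i. lit j i (x j))
                   else in_nbrs i \<noteq> {} \<and> (\<forall>j\<in>in_nbrs i. lit j i (x j)))"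

definition F :: "(nat \<Rightarrow> int) \<Rightarrow> (nat \<Rightarrow> int)" where
  "F x = restrict (\<lambda>i. if active i x then xon i else 0) V"

definition X :: "(nat \<Rightarrow> int) set" where
  "X = state_space n (\<lambda>_. 0) xmax"

lemma X_PiE: "X = PiE V (\<lambda>i. {0..xmax i})"
  by (simp add: X_def state_space_def)

lemma F_in_X: "F x \<in> X"
  unfolding F_def X_PiE using xon_range xmax_range by (auto simp: PiE_iff)

lemma F_apply: "i \<in> V \<Longrightarrow> F x i = (if active i x then xon i else 0)"
  by (simp add: F_def)

lemma F_canalized:
  assumes "i \<in> V" "p \<in> in_nbrs i" "lit p i (y p) = fix_on i"
  shows "F y i = fix_val i"
proof -
  have "active i y = fix_on i" using assms(2,3) unfolding active_def by auto
  then show ?thesis using assms(1) by (simp add: F_apply fix_val_eq)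
qed

definition settled :: "nat \<Rightarrow> nat \<Rightarrow> bool" where
  "settled t i \<longleftrightarrow> (\<forall>x\<in>X. (F ^^ t) x i = fix_val i)"

lemma settled_Suc: "settled t i \<Longrightarrow> settled (Suc t) i"
  unfolding settled_def funpow_Suc_right using F_in_X by simp

lemma settled_mono:
  assumes "settled t i" "t \<le> t'"
  shows "settled t' i"
  using assms(2,1) by (induction rule: dec_induct) (auto intro: settled_Suc)

lemma settled_source:
  assumes "i \<in> V" "in_nbrs i = {}"
  shows "settled 1 i"
  using assms by (simp add: settled_def F_apply fix_val_eq active_def fix_on_def canal_on_def)

lemma settled_cut_tgt:
  assumes "i \<in> V" "is_cut_tgt i"
  shows "settled 2 i"
proof -
  let ?U = "comp_of i"
  have nt: "nontrivial_initial ?U" and i: "i = cut_tgt ?U"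
    using assms(2) comp_of by (auto simp: is_cut_tgt_def)
  let ?v = "cut_src ?U"
  have "(?v, i) \<in> R" using cut_arc(3)[OF nt] i by simp
  then have v: "?v \<in> in_nbrs i" "?v \<in> V" using R_subset by (auto simp: in_nbrs_def)
  have fix_on_i: "fix_on i = lit ?v i 0" using v(1) assms(2) by (auto simp: fix_on_def canal_on_def)
  show ?thesis
    unfolding settled_def
  proof
    fix x assume "x \<in> X"
    have "lit ?v i (F x ?v) = lit ?v i 0"
      using lit_cut_const[OF nt] i F_apply[OF v(2)] by auto
    then have "F (F x) i = fix_val i" using F_canalized[OF assms(1) v(1)] fix_on_i by simp
    then show "(F ^^ 2) x i = fix_val i" by (simp add: numeral_2_eq_2)
  qed
qed

lemma settled_step:
  assumes "i \<in> V" "in_nbrs i \<noteq> {}" "\<not> is_cut_tgt i" "settled t (parent i)"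
  shows "settled (Suc t) i"
proof -
  have "parent i \<in> in_nbrs i" using parent_props(1)[OF assms(1-3)] by (simp add: in_nbrs_def)
  moreover have "fix_on i = lit (parent i) i (fix_val (parent i))"
    using assms(2,3) by (simp add: fix_on_def canal_on_def)
  ultimately show ?thesis
    using assms(4) F_canalized[OF assms(1)] by (simp add: settled_def)
qed

lemma settled_nontrivial: "in_nontrivial i \<Longrightarrow> settled (2 + cut_dist i) i"
proof (induction "cut_dist i" arbitrary: i rule: less_induct)
  case less
  have i: "i \<in> V" using comp_of[OF less.prems] nontrivial_initial_subset(1) by blast
  consider "in_nbrs i = {}" | "is_cut_tgt i" | "in_nbrs i \<noteq> {}" "\<not> is_cut_tgt i" by blast
  then show ?case
  proof cases
    case 1
    then show ?thesis using settled_source[OF i] settled_mono by simp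
  next
    case 2
    then show ?thesis using settled_cut_tgt[OF i] cut_dist_tgt by simp
  next
    case 3
    note p = parent_inside[OF less.prems 3(2)]
    then have "settled (Suc (2 + cut_dist (parent i))) i"
      using less.hyps settled_step[OF i 3] by blast
    then show ?thesis using p(3) settled_mono by simp
  qed
qed

lemma beta_nontrivial: "in_nontrivial i \<Longrightarrow> beta V E = 1"
  by (auto simp: beta_def basic_def in_nontrivial_def nontrivial_initial_def)

lemma settled_lv: "i \<in> V \<Longrightarrow> settled (lv i + beta V E) i"
proof (induction "depth i" arbitrary: i rule: less_induct)
  case less
  note i = less.prems
  consider "in_nbrs i = {}" | "in_nontrivial i" | "in_nbrs i \<noteq> {}" "\<not> in_nontrivial i" by blast
  then show ?case
  proof cases
    case 1
    then show ?thesis using settled_source[OF i] settled_mono lv_pos[OF i] by simp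
  next
    case 2
    then have "2 + cut_dist i \<le> lv i + beta V E"
      using cut_dist(2) card_comp_of_le_lv beta_nontrivial by fastforce
    then show ?thesis using settled_nontrivial[OF 2] settled_mono by blast
  next
    case 3
    then have not_tgt: "\<not> is_cut_tgt i" by (auto simp: is_cut_tgt_def)
    then have "settled (lv (parent i) + beta V E) (parent i)"
      using less.hyps parent_props[OF i 3(1)] by blast
    then have "settled (Suc (lv (parent i) + beta V E)) i" by (rule settled_step[OF i 3(1) not_tgt])
    then show ?thesis using parent_outside(2)[OF i 3(2,1)] settled_mono by simp
  qed
qed

lemma F_pow_const: "\<exists>c. \<forall>x\<in>X. (F ^^ (the_enat (lam V E) + beta V E)) x = c"
proof -
  define T where "T = the_enat (lam V E) + beta V E"
  have T: "T = Max (lv ` V) + beta V E" unfolding T_def lam_eq_Max_lv by simp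
  have settled: "settled T i" if "i \<in> V" for i
  proof -
    have "lv i + beta V E \<le> T" using that T by simp
    then show ?thesis using settled_lv[OF that] settled_mono by blast
  qed
  have "1 \<in> V" using n_pos by simp
  then have "lv 1 \<le> Max (lv ` V)" by simp
  then have "0 < T" using lv_pos[OF \<open>1 \<in> V\<close>] T by linarith
  then obtain t where t: "T = Suc t" using gr0_implies_Suc by blast
  have "(F ^^ T) x = restrict fix_val V" if "x \<in> X" for x
  proof
    fix i
    show "(F ^^ T) x i = restrict fix_val V i"
    proof (cases "i \<in> V")
      case True
      then show ?thesis using settled that by (simp add: settled_def)
    next
      case False
      have "(F ^^ T) x i = F ((F ^^ t) x) i" unfolding t by simp
      then show ?thesis using False by (auto simp: F_def)
    qed
  qed
  then show ?thesis unfolding T_def by blast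
qed

lemma active_cong: "(\<And>k. k \<in> in_nbrs i \<Longrightarrow> x k = y k) \<Longrightarrow> active i x = active i y"
  unfolding active_def by auto

lemma active_single:
  assumes "j \<in> in_nbrs i" "\<And>k. k \<in> in_nbrs i \<Longrightarrow> k \<noteq> j \<Longrightarrow> lit k i (y k) \<longleftrightarrow> \<not> fix_on i"
  shows "active i y = lit j i (y j)"
  using assms unfolding active_def by auto

lemma active_update:
  assumes "j \<in> in_nbrs i" "active i (x(j := a)) \<noteq> active i x"
  shows "active i (x(j := a)) = lit j i a" "active i x = lit j i (x j)"
  using assms unfolding active_def by (auto split: if_splits)

lemma lit_change_arc:
  assumes "lit j i (a + 1) \<noteq> lit j i a" "j \<in> in_nbrs i"
  shows "(j, i, if lit j i (a + 1) then Pos else Neg) \<in> E"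
proof -
  obtain s where s: "(j, i, s) \<in> E" using assms(2) by (auto simp: in_nbrs_def arcrel_def)
  then show ?thesis using assms(1) by (cases s) (auto simp: lit_def parallel_def split: if_splits)
qed

lemma lit_switch:
  assumes "(j, i, s) \<in> E"
  obtains a where "0 \<le> a" "a < xmax j" "lit j i (a + 1) \<longleftrightarrow> s = Pos" "lit j i a \<longleftrightarrow> s = Neg"
proof -
  have thr: "1 \<le> thr j" "thr j \<le> xmax j" using thr_range assms by (auto simp: arcrel_def)
  show ?thesis
  proof (cases "parallel j i")
    case True
    then show ?thesis
      using that[of "if s = Pos then 0 else 1"] parallel_xmax[OF True] by (cases s) (auto simp: lit_def)
  next
    case False
    then have "(j, i, Pos) \<in> E \<longleftrightarrow> s = Pos"
      using assms by (cases s) (auto simp: parallel_def)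
    then show ?thesis using that[of "thr j - 1"] False thr by (cases s) (auto simp: lit_def)
  qed
qed

lemma F_diff:
  assumes "i \<in> V" "1 \<le> xon i"
  shows "0 < F y i - F x i \<longleftrightarrow> active i y \<and> \<not> active i x"
    and "F y i - F x i < 0 \<longleftrightarrow> \<not> active i y \<and> active i x"
  using assms by (simp_all add: F_apply)

lemma interaction_graph_subset: "interaction_graph n (\<lambda>_. 0) xmax F \<subseteq> E"
proof
  fix t assume "t \<in> interaction_graph n (\<lambda>_. 0) xmax F"
  then obtain j i s x where t: "t = (j, i, s)" and V: "j \<in> V" "i \<in> V"
    and change: "case s of Pos \<Rightarrow> F (x(j := x j + 1)) i - F x i > 0
                         | Neg \<Rightarrow> F (x(j := x j + 1)) i - F x i < 0"
    unfolding interaction_graph_def by blast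
  let ?y = "x(j := x j + 1)"
  have j: "j \<in> in_nbrs i"
  proof (rule ccontr)
    assume "j \<notin> in_nbrs i"
    then have "active i ?y = active i x" by (intro active_cong) auto
    then show False using change V(2) by (cases s) (auto simp: F_apply)
  qed
  have "active i ?y \<noteq> active i x" and Pos: "active i ?y \<longleftrightarrow> s = Pos"
    using change F_diff[OF V(2) xon_pos, of ?y x] j by (cases s; auto)+
  then have "lit j i (x j + 1) \<noteq> lit j i (x j)" "lit j i (x j + 1) \<longleftrightarrow> s = Pos"
    using active_update[OF j] by simp_all
  then show "t \<in> E" using t lit_change_arc[OF _ j] by (cases s) fastforce+
qed

definition neutral :: "nat \<Rightarrow> nat \<Rightarrow> int" where
  "neutral i k = (SOME a. 0 \<le> a \<and> a \<le> xmax k \<and> (lit k i a \<longleftrightarrow> \<not> fix_on i))"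

lemma neutral:
  assumes "(k, i) \<in> R"
  shows "0 \<le> neutral i k" "neutral i k \<le> xmax k" "lit k i (neutral i k) \<longleftrightarrow> \<not> fix_on i"
proof -
  obtain a b where "0 \<le> a" "a \<le> xmax k" "lit k i a" "0 \<le> b" "b \<le> xmax k" "\<not> lit k i b"
    using lit_both_values[OF assms] .
  then have "\<exists>c. 0 \<le> c \<and> c \<le> xmax k \<and> (lit k i c \<longleftrightarrow> \<not> fix_on i)" by (cases "fix_on i") auto
  from someI_ex[OF this] show "0 \<le> neutral i k" "neutral i k \<le> xmax k" "lit k i (neutral i k) \<longleftrightarrow> \<not> fix_on i"
    unfolding neutral_def by blast+
qed

text \<open>To witness an arc j \<rightarrow> i, set every other in-neighbour of i to a neutral value, whose
  literal disagrees with fix_on i, so that i follows the literal of j alone.\<close>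

lemma subset_interaction_graph: "E \<subseteq> interaction_graph n (\<lambda>_. 0) xmax F"
proof
  fix t assume "t \<in> E"
  then obtain j i s where t: "t = (j, i, s)" and arc: "(j, i, s) \<in> E" by (cases t) auto
  have V: "j \<in> V" "i \<in> V" using arc arcs_in_V by auto
  have j: "j \<in> in_nbrs i" using arc by (auto simp: in_nbrs_def arcrel_def)
  obtain a where a: "0 \<le> a" "a < xmax j" "lit j i (a + 1) \<longleftrightarrow> s = Pos" "lit j i a \<longleftrightarrow> s = Neg"
    using lit_switch[OF arc] .
  define x where "x = restrict (\<lambda>k. if k = j then a else if k \<in> in_nbrs i then neutral i k else 0) V"
  let ?y = "x(j := x j + 1)"
  have x: "x \<in> X" "x j = a"
    unfolding X_PiE x_def using a(1,2) V neutral xmax_range by (auto simp: PiE_iff in_nbrs_def)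
  have "lit k i (z k) \<longleftrightarrow> \<not> fix_on i" if "z \<in> {x, ?y}" "k \<in> in_nbrs i" "k \<noteq> j" for k z
    using that neutral(3)[of k i] R_subset by (auto simp: x_def in_nbrs_def)
  then have "active i x = lit j i a" "active i ?y = lit j i (a + 1)"
    using active_single[OF j, of x] active_single[OF j, of ?y] x(2) by auto
  then have "case s of Pos \<Rightarrow> F ?y i - F x i > 0 | Neg \<Rightarrow> F ?y i - F x i < 0"
    using a(3,4) F_diff[OF V(2) xon_pos, of ?y x] j by (cases s) auto
  then show "t \<in> interaction_graph n (\<lambda>_. 0) xmax F"
    unfolding interaction_graph_def t using V x a(2) unfolding X_def by auto
qed

lemma interaction_graph_F: "interaction_graph n (\<lambda>_. 0) xmax F = E"
  using interaction_graph_subset subset_interaction_graph by blast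

lemma is_FDS_F: "is_FDS n (\<lambda>_. 0) xmax F"
  unfolding is_FDS_def using xmax_range F_in_X unfolding X_def by auto

lemma degree_bounded_F: "degree_bounded n (\<lambda>_. 0) xmax F"
  unfolding degree_bounded_def Let_def interaction_graph_F
proof
  fix i
  show "if out_deg E i = 0 \<and> 0 < in_deg E i then card {0..xmax i} = 2
        else card {0..xmax i} \<le> out_deg E i + 1"
  proof (cases "out_deg E i = 0")
    case False
    then show ?thesis using xmax_le_out_deg[OF False] xmax_range[of i] by simp
  qed (simp add: xmax_def)
qed

end

theorem mainTheorem8:
  fixes n :: nat and E :: "(nat \<times> nat \<times> sign) set"
  assumes "n \<ge> 1"
    and "E \<subseteq> {1..n} \<times> {1..n} \<times> UNIV"
    and "\<forall>C\<in>ucomps {1..n} E. \<not> signed_cycle C (induced E C)"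
  shows "lam {1..n} E = Max ((\<lambda>C. lam C (induced E C)) ` ucomps {1..n} E)
       \<and> beta {1..n} E = Max ((\<lambda>C. beta C (induced E C)) ` ucomps {1..n} E)
       \<and> (\<exists>a b f. is_FDS n a b f \<and> interaction_graph n a b f = E \<and> degree_bounded n a b f \<and>
            (\<exists>c. \<forall>x\<in>state_space n a b.
                 (f ^^ (the_enat (lam {1..n} E) + beta {1..n} E)) x = c))"
proof -
  interpret fds_construction n E using assms by unfold_locales
  have fin: "finite {1..n}" and ne: "{1..n} \<noteq> {}" using assms(1) by auto
  have "is_FDS n (\<lambda>_. 0) xmax F \<and> interaction_graph n (\<lambda>_. 0) xmax F = E \<and>
      degree_bounded n (\<lambda>_. 0) xmax F \<and>
      (\<exists>c. \<forall>x\<in>state_space n (\<lambda>_. 0) xmax. (F ^^ (the_enat (lam {1..n} E) + beta {1..n} E)) x = c)"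
    using F_pow_const unfolding X_def by (intro conjI is_FDS_F interaction_graph_F degree_bounded_F)
  then show ?thesis
    using lam_components[OF fin assms(2) ne] beta_components[OF fin assms(2) ne] by blast
qed

end
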